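(* For all teams $T,S$ the following are equivalent: (1) $T\equiv_{\mathrm{st}}S$; (2) there are surjective, non-decreasing functions $\mu,\nu:\mathbb N\to\mathbb N$ such that $T^{\mu(n)}\equiv_{\mathrm{st}}S^{\nu(n)}$ for all $n\ge0$.
   Context: A trace is an infinite sequence $t=t(0)t(1)\cdots$ of subsets of a set $\mathrm{AP}$ of propositions; $t^i:=t(i)t(i+1)\cdots$. A team is a set of traces; $T^i:=\{t^i:t\in T\}$. A stuttering function of a trace $t$ is a strictly increasing function $f:\mathbb N\to\mathbb N$ with $f(0)=0$ such that $t(f(k))=t(f(k)+1)=\cdots=t(f(k+1)-1)$ for all $k\ge0$. A stuttering function of a team $T$ is a function that is a stuttering function of every $t\in T$. For $f:\mathbb N\to\mathbb N$, $t[f]:=t(f(0))t(f(1))t(f(2))\cdots$ and $T[f]:=\{t[f]:t\in T\}$. Teams $T,T'$ are stutter-equivalent ($T\equiv_{\mathrm{st}}T'$) if there are a stuttering function $f$ of $T$ and a stuttering function $f'$ of $T'$ with $T[f]=T'[f']$. *)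

theory Defs
  imports Main
begin

type_synonym 'a trace = "nat \<Rightarrow> 'a set"
type_synonym 'a team = "'a trace set"

definition suffix_trace :: "'a trace \<Rightarrow> nat \<Rightarrow> 'a trace" where
  "suffix_trace t i = (\<lambda>n. t (i + n))"

definition suffix_team :: "'a team \<Rightarrow> nat \<Rightarrow> 'a team" where
  "suffix_team T i = (\<lambda>t. suffix_trace t i) ` T"

definition stuttering_fun :: "'a trace \<Rightarrow> (nat \<Rightarrow> nat) \<Rightarrow> bool" where
  "stuttering_fun t f \<longleftrightarrow> strict_mono f \<and> f 0 = 0 \<and>
     (\<forall>k j. f k \<le> j \<and> j < f (Suc k) \<longrightarrow> t j = t (f k))"

definition stuttering_fun_team :: "'a team \<Rightarrow> (nat \<Rightarrow> nat) \<Rightarrow> bool" where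
  "stuttering_fun_team T f \<longleftrightarrow> (\<forall>t\<in>T. stuttering_fun t f)"

definition apply_fun_trace :: "'a trace \<Rightarrow> (nat \<Rightarrow> nat) \<Rightarrow> 'a trace" where
  "apply_fun_trace t f = (\<lambda>k. t (f k))"

definition apply_fun_team :: "'a team \<Rightarrow> (nat \<Rightarrow> nat) \<Rightarrow> 'a team" where
  "apply_fun_team T f = (\<lambda>t. apply_fun_trace t f) ` T"

definition stutter_equiv :: "'a team \<Rightarrow> 'a team \<Rightarrow> bool" where
  "stutter_equiv T T' \<longleftrightarrow> (\<exists>f f'. stuttering_fun_team T f \<and> stuttering_fun_team T' f' \<and>
     apply_fun_team T f = apply_fun_team T' f')"

end

theory Submission
  imports Defs
begin

text \<open>
  Given stuttering functions \<open>f\<close> of \<open>T\<close> and \<open>f'\<close> of \<open>S\<close> with \<open>T[f] = S[f']\<close>, both teams are cut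
  into blocks, the \<open>k\<close>-th block of \<open>T\<close> being \<open>[f k, f (k+1))\<close>. Any suffix of \<open>T\<close> starting inside its
  \<open>k\<close>-th block stutters down to \<open>T[f]\<close> without its first \<open>k\<close> letters, and likewise for \<open>S\<close>;
  so two suffixes starting in blocks with the same index are stutter-equivalent. The functions
  \<open>\<mu>\<close> and \<open>\<nu>\<close> walk through the \<open>k\<close>-th blocks of \<open>T\<close> and \<open>S\<close> synchronously, letting the
  one with the shorter block wait at its last position. Conversely, \<open>\<mu> 0 = \<nu> 0 = 0\<close>.
\<close>

lemma stuttering_fun_block:
  assumes "stuttering_fun t f" "f k \<le> j" "j < f (Suc k)"
  shows "t j = t (f k)"
  using assms unfolding stuttering_fun_def by blast

lemma suffix_team_0 [simp]: "suffix_team T 0 = T"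
  unfolding suffix_team_def suffix_trace_def by simp

lemma suffix_apply_fun_team:
  "suffix_team (apply_fun_team T f) k = apply_fun_team T (\<lambda>j. f (k + j))"
  unfolding suffix_team_def suffix_trace_def apply_fun_team_def apply_fun_trace_def
  by (simp add: image_image)

lemma stutter_equiv_strict_mono_witnesses:
  assumes "stutter_equiv T S"
  obtains f f' where "stuttering_fun_team T f" "stuttering_fun_team S f'"
    "apply_fun_team T f = apply_fun_team S f'"
    "strict_mono f" "f 0 = 0" "strict_mono f'" "f' 0 = 0"
proof -
  obtain f f' where st: "stuttering_fun_team T f" and st': "stuttering_fun_team S f'"
    and eq: "apply_fun_team T f = apply_fun_team S f'"
    using assms unfolding stutter_equiv_def by blast
  show thesis
  proof (cases "T = {}")
    case True
    then have "S = {}" using eq unfolding apply_fun_team_def by auto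
    with True show thesis
      by (intro that[of id id]) (auto simp: stuttering_fun_team_def strict_mono_def)
  next
    case False
    then obtain t where "t \<in> T" by blast
    with st have "strict_mono f" "f 0 = 0"
      unfolding stuttering_fun_team_def stuttering_fun_def by auto
    from False obtain s where "s \<in> S" using eq unfolding apply_fun_team_def by auto
    with st' have "strict_mono f'" "f' 0 = 0"
      unfolding stuttering_fun_team_def stuttering_fun_def by auto
    show thesis by (rule that) fact+
  qed
qed

definition block_index :: "(nat \<Rightarrow> nat) \<Rightarrow> nat \<Rightarrow> nat" where
  "block_index g n = (LEAST k. n < g (Suc k))"

lemma block_index_upper:
  assumes "strict_mono g"
  shows "n < g (Suc (block_index g n))"
  unfolding block_index_def
  by (rule LeastI[of _ n]) (use strict_mono_imp_increasing[OF assms, of "Suc n"] in simp)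

lemma block_index_lower:
  assumes "strict_mono g" "g 0 = 0"
  shows "g (block_index g n) \<le> n"
proof (cases "block_index g n")
  case 0
  then show ?thesis using assms(2) by simp
next
  case (Suc k)
  have "\<not> n < g (Suc k)"
  proof
    assume "n < g (Suc k)"
    then have "block_index g n \<le> k" unfolding block_index_def by (rule Least_le)
    with Suc show False by simp
  qed
  with Suc show ?thesis by simp
qed

lemma block_index_eqI:
  assumes "strict_mono g" "g k \<le> n" "n < g (Suc k)"
  shows "block_index g n = k"
  unfolding block_index_def
proof (rule Least_equality)
  fix k' assume k': "n < g (Suc k')"
  show "k \<le> k'"
  proof (rule ccontr)
    assume "\<not> k \<le> k'"
    then have "g (Suc k') \<le> g k" using assms(1) by (simp add: strict_mono_less_eq)
    with assms(2) k' show False by simp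
  qed
qed fact

lemma mono_block_index:
  assumes "strict_mono g"
  shows "mono (block_index g)"
proof (rule monoI)
  fix n m :: nat assume "n \<le> m"
  with block_index_upper[OF assms, of m] have "n < g (Suc (block_index g m))" by simp
  then show "block_index g n \<le> block_index g m" unfolding block_index_def by (rule Least_le)
qed

text \<open>The stuttering function of the suffix squeezes the rest of block \<open>k\<close> into position \<open>0\<close>
  and otherwise follows \<open>f\<close> from block \<open>k + 1\<close> on.\<close>

lemma stuttering_fun_team_suffix_in_block:
  assumes st: "stuttering_fun_team T f" and sm: "strict_mono f"
    and i: "f k \<le> i" "i < f (Suc k)"
  obtains g where "stuttering_fun_team (suffix_team T i) g"
    "apply_fun_team (suffix_team T i) g = suffix_team (apply_fun_team T f) k"
proof -
  define g where "g j = (if j = 0 then 0 else f (k + j) - i)" for j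
  have later_blocks: "f (Suc k) \<le> f (k + j)" if "j \<noteq> 0" for j
    using sm that by (simp add: strict_mono_less_eq)
  have "strict_mono g"
    unfolding strict_mono_Suc_iff
  proof
    fix j
    have "f (k + j) < f (k + Suc j)" using sm by (simp add: strict_mono_less)
    with i later_blocks[of j] later_blocks[of "Suc j"] show "g j < g (Suc j)"
      by (auto simp: g_def)
  qed
  have at_g: "t (i + g j) = t (f (k + j))" if "t \<in> T" for t j
  proof (cases "j = 0")
    case True
    from st that have "stuttering_fun t f" by (simp add: stuttering_fun_team_def)
    then have "t i = t (f k)" using i by (rule stuttering_fun_block)
    with True show ?thesis by (simp add: g_def)
  next
    case False
    with later_blocks[of j] i show ?thesis by (simp add: g_def)
  qed
  have "stuttering_fun (suffix_trace t i) g" if t: "t \<in> T" for t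
    unfolding stuttering_fun_def
  proof (intro conjI allI impI)
    fix j m assume jm: "g j \<le> m \<and> m < g (Suc j)"
    have stt: "stuttering_fun t f" using st t unfolding stuttering_fun_team_def by blast
    have "f (k + j) \<le> i + m \<and> i + m < f (Suc (k + j))"
      using jm i later_blocks[of j] later_blocks[of "Suc j"]
      by (cases "j = 0"; simp add: g_def; linarith)
    then have "t (i + m) = t (f (k + j))" by (intro stuttering_fun_block[OF stt]) simp_all
    then show "suffix_trace t i m = suffix_trace t i (g j)"
      using at_g[OF t, of j] by (simp add: suffix_trace_def)
  qed (use \<open>strict_mono g\<close> in \<open>simp_all add: g_def\<close>)
  then have "stuttering_fun_team (suffix_team T i) g"
    unfolding stuttering_fun_team_def suffix_team_def by blast
  moreover have "apply_fun_team (suffix_team T i) g = apply_fun_team T (\<lambda>j. f (k + j))"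
    unfolding apply_fun_team_def suffix_team_def image_image
    by (rule image_cong[OF refl]) (simp add: apply_fun_trace_def suffix_trace_def at_g)
  ultimately show thesis
    by (rule that[unfolded suffix_apply_fun_team])
qed

lemma stutter_equiv_suffixes_in_blocks:
  assumes T: "stuttering_fun_team T f" "strict_mono f" and S: "stuttering_fun_team S f'" "strict_mono f'"
    and eq: "apply_fun_team T f = apply_fun_team S f'"
    and "f k \<le> i" "i < f (Suc k)" "f' k \<le> i'" "i' < f' (Suc k)"
  shows "stutter_equiv (suffix_team T i) (suffix_team S i')"
proof -
  obtain g where "stuttering_fun_team (suffix_team T i) g"
    "apply_fun_team (suffix_team T i) g = suffix_team (apply_fun_team T f) k"
    using stuttering_fun_team_suffix_in_block[OF T \<open>f k \<le> i\<close> \<open>i < f (Suc k)\<close>] .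
  moreover obtain g' where "stuttering_fun_team (suffix_team S i') g'"
    "apply_fun_team (suffix_team S i') g' = suffix_team (apply_fun_team S f') k"
    using stuttering_fun_team_suffix_in_block[OF S \<open>f' k \<le> i'\<close> \<open>i' < f' (Suc k)\<close>] .
  ultimately show ?thesis
    unfolding stutter_equiv_def eq by (intro exI[of _ g] exI[of _ g']) simp
qed

text \<open>While \<open>n\<close> runs through block \<open>k\<close> of \<open>h\<close>, \<open>block_walk f h n\<close> runs through block \<open>k\<close> of \<open>f\<close>
  and then waits at its last position.\<close>

definition block_walk :: "(nat \<Rightarrow> nat) \<Rightarrow> (nat \<Rightarrow> nat) \<Rightarrow> nat \<Rightarrow> nat" where
  "block_walk f h n = (let k = block_index h n in f k + min (n - h k) (f (Suc k) - f k - 1))"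

lemma block_walk_in_block:
  assumes "strict_mono f"
  shows "f (block_index h n) \<le> block_walk f h n" "block_walk f h n < f (Suc (block_index h n))"
  using strict_monoD[OF assms, of "block_index h n" "Suc (block_index h n)"]
  by (auto simp: block_walk_def Let_def)

lemma mono_block_walk:
  assumes f: "strict_mono f" and h: "strict_mono h"
  shows "mono (block_walk f h)"
proof (rule monoI)
  fix n m :: nat assume nm: "n \<le> m"
  let ?k = "block_index h n" and ?l = "block_index h m"
  have "?k \<le> ?l" using mono_block_index[OF h] nm by (rule monoD)
  then consider "?k = ?l" | "Suc ?k \<le> ?l" by linarith
  then show "block_walk f h n \<le> block_walk f h m"
  proof cases
    case 1
    with nm show ?thesis by (simp add: block_walk_def Let_def min.coboundedI1)
  next
    case 2
    then have "f (Suc ?k) \<le> f ?l" using f by (simp add: strict_mono_less_eq)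
    with block_walk_in_block[OF f, of h n] block_walk_in_block[OF f, of h m] show ?thesis
      by linarith
  qed
qed

lemma surj_block_walk:
  assumes f: "strict_mono f" "f 0 = 0" and h: "strict_mono h"
    and shorter: "\<And>k. f (Suc k) - f k \<le> h (Suc k) - h k"
  shows "surj (block_walk f h)"
proof (rule surjI)
  fix x
  define k where "k = block_index f x"
  have x: "f k \<le> x" "x < f (Suc k)"
    unfolding k_def using block_index_lower[OF f] block_index_upper[OF f(1)] by auto
  with shorter[of k] have "block_index h (h k + (x - f k)) = k"
    by (intro block_index_eqI[OF h]) auto
  with x show "block_walk f h (h k + (x - f k)) = x" by (simp add: block_walk_def)
qed

lemma mono_surj_0:
  fixes \<mu> :: "nat \<Rightarrow> nat"
  assumes "surj \<mu>" "mono \<mu>"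
  shows "\<mu> 0 = 0"
proof -
  obtain x where "\<mu> x = 0" using assms(1) by (metis surjD)
  with monoD[OF assms(2), of 0 x] show ?thesis by simp
qed

theorem mainTheorem8:
  fixes T S :: "'a team"
  shows "stutter_equiv T S \<longleftrightarrow>
    (\<exists>\<mu> \<nu> :: nat \<Rightarrow> nat. surj \<mu> \<and> mono \<mu> \<and> surj \<nu> \<and> mono \<nu> \<and>
       (\<forall>n. stutter_equiv (suffix_team T (\<mu> n)) (suffix_team S (\<nu> n))))"
proof
  assume "stutter_equiv T S"
  then obtain f f' where st: "stuttering_fun_team T f" "stuttering_fun_team S f'"
    and eq: "apply_fun_team T f = apply_fun_team S f'"
    and f: "strict_mono f" "f 0 = 0" and f': "strict_mono f'" "f' 0 = 0"
    by (rule stutter_equiv_strict_mono_witnesses)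
  define h where "h k = f k + f' k" for k
  have h: "strict_mono h" using f(1) f'(1) by (simp add: h_def strict_mono_def add_strict_mono)
  have shorter: "f (Suc k) - f k \<le> h (Suc k) - h k" "f' (Suc k) - f' k \<le> h (Suc k) - h k" for k
    using strict_monoD[OF f(1), of k "Suc k"] strict_monoD[OF f'(1), of k "Suc k"]
    by (auto simp: h_def)
  have walk_surj: "surj (block_walk f h)" "surj (block_walk f' h)"
    using surj_block_walk[OF f h shorter(1)] surj_block_walk[OF f' h shorter(2)] .
  have walk_mono: "mono (block_walk f h)" "mono (block_walk f' h)"
    using mono_block_walk[OF f(1) h] mono_block_walk[OF f'(1) h] .
  have walk_equiv: "stutter_equiv (suffix_team T (block_walk f h n)) (suffix_team S (block_walk f' h n))" for n
    by (rule stutter_equiv_suffixes_in_blocks[OF st(1) f(1) st(2) f'(1) eq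
          block_walk_in_block[OF f(1)] block_walk_in_block[OF f'(1)]])
  show "\<exists>\<mu> \<nu> :: nat \<Rightarrow> nat. surj \<mu> \<and> mono \<mu> \<and> surj \<nu> \<and> mono \<nu> \<and>
       (\<forall>n. stutter_equiv (suffix_team T (\<mu> n)) (suffix_team S (\<nu> n)))"
    using walk_surj walk_mono walk_equiv by blast
next
  assume "\<exists>\<mu> \<nu> :: nat \<Rightarrow> nat. surj \<mu> \<and> mono \<mu> \<and> surj \<nu> \<and> mono \<nu> \<and>
       (\<forall>n. stutter_equiv (suffix_team T (\<mu> n)) (suffix_team S (\<nu> n)))"
  then obtain \<mu> \<nu> :: "nat \<Rightarrow> nat" where "surj \<mu>" "mono \<mu>" "surj \<nu>" "mono \<nu>"
    and "\<forall>n. stutter_equiv (suffix_team T (\<mu> n)) (suffix_team S (\<nu> n))" by (elim exE conjE)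
  then show "stutter_equiv T S" by (metis mono_surj_0 suffix_team_0)
qed

end
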